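(* Let $n\ge k\ge 3$ be integers. Then \[ \mathsf{opt}_{\operatorname{bandit}}^{\operatorname{det}}(n,k)\ge \left(\frac{k}{2}-1\right)\ln(n/k). \]
   Context: Prediction with expert advice in the realizable case: $\mathcal{Y}=\{1,\dots,k\}$, $\mathcal{X}=[k]^n$, experts $h_i(x)=x_i$, $i=1,\dots,n$. $\mathcal{P}_0$ is the set of finite sequences of examples in $\mathcal{X}\times\mathcal{Y}$ consistent with some $h_i$. Bandit feedback: each round the adversary presents $x_t$, a deterministic learner predicts $\hat y_t$ as a function of past observations and $x_t$, and learns only whether $\hat y_t$ equals the true label $y_t$. $\mathsf{opt}_{\operatorname{bandit}}^{\operatorname{det}}(n,k)$ is the infimum over deterministic learners of the supremum over $S\in\mathcal{P}_0$ of the number of mistakes ($\hat y_t\ne y_t$). *)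

theory Defs
  imports Complex_Main "HOL-Library.Extended_Real"
begin

text \<open>Instances x in X = [k]^n are lists of length n with entries in {1..k};
 labels are in Y = {1..k}. Expert i (i < n, 0-indexed) predicts x ! i.\<close>

definition instances :: "nat \<Rightarrow> nat \<Rightarrow> nat list set" where
  "instances n k = {x. length x = n \<and> set x \<subseteq> {1..k}}"

definition realizable_seqs :: "nat \<Rightarrow> nat \<Rightarrow> (nat list \<times> nat) list set" where
  "realizable_seqs n k = {S. (\<forall>(x, y) \<in> set S. x \<in> instances n k \<and> y \<in> {1..k}) \<and>
      (\<exists>i < n. \<forall>(x, y) \<in> set S. x ! i = y)}"

text \<open>Observation history: past instances, the learner's predictions and the bandit feedback bit.\<close>
type_synonym history = "(nat list \<times> nat \<times> bool) list"
type_synonym learner = "history \<Rightarrow> nat list \<Rightarrow> nat"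

definition det_learners :: "nat \<Rightarrow> learner set" where
  "det_learners k = {L. \<forall>h x. L h x \<in> {1..k}}"

fun mistakes_from :: "learner \<Rightarrow> history \<Rightarrow> (nat list \<times> nat) list \<Rightarrow> nat" where
  "mistakes_from L h [] = 0"
| "mistakes_from L h ((x, y) # S) =
     (let p = L h x in (if p \<noteq> y then 1 else 0) + mistakes_from L (h @ [(x, p, p = y)]) S)"

definition mistakes :: "learner \<Rightarrow> (nat list \<times> nat) list \<Rightarrow> nat" where
  "mistakes L S = mistakes_from L [] S"

definition opt_bandit_det :: "nat \<Rightarrow> nat \<Rightarrow> ereal" where
  "opt_bandit_det n k =
     (INF L \<in> det_learners k. SUP S \<in> realizable_seqs n k. ereal (real (mistakes L S)))"

end

theory Submission
  imports Defs
begin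

text \<open>The adversary keeps a set V of experts consistent with everything revealed so far. It shows
 an instance on which the experts of V are spread evenly over the k labels, so that each label is
 voted for by at most c = \<lceil>|V|/k\<rceil> of them, and declares every prediction wrong; the
 experts agreeing with the prediction are discarded. Each round thus costs a mistake, and since
 ln (m/(m - c)) \<le> c/(m - c) \<le> 2/(k - 2), the potential (k/2 - 1) ln (|V|/k) falls by at
 most one per round. It starts at (k/2 - 1) ln (n/k) and is non-positive once fewer than k experts
 remain.\<close>

lemma card_residue_class_le:
  fixes k m r :: nat
  assumes "0 < k"
  shows "card {t \<in> {..<m}. t mod k = r} \<le> (m + k - 1) div k"
proof -
  define q where "q = (m + k - 1) div k"
  have "{t \<in> {..<m}. t mod k = r} \<subseteq> (\<lambda>d. d * k + r) ` {..<q}"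
  proof
    fix t assume "t \<in> {t \<in> {..<m}. t mod k = r}"
    then have t: "t < m" "t mod k = r" by auto
    have "Suc (t div k) * k \<le> m + k - 1"
      using div_times_less_eq_dividend[of t k] t(1) unfolding mult_Suc by linarith
    then have "t div k < q"
      unfolding q_def Suc_le_eq[symmetric] using less_eq_div_iff_mult_less_eq[OF assms] by blast
    moreover have "t = t div k * k + r"
      using div_mult_mod_eq[of t k] t(2) by simp
    ultimately show "t \<in> (\<lambda>d. d * k + r) ` {..<q}" by blast
  qed
  then have "card {t \<in> {..<m}. t mod k = r} \<le> card ((\<lambda>d. d * k + r) ` {..<q})"
    by (intro card_mono) auto
  also have "\<dots> \<le> q"
    using card_image_le[of "{..<q}"] by simp
  finally show ?thesis unfolding q_def .
qed

lemma balanced_instance: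
  fixes V :: "nat set"
  assumes "0 < k" "finite V" "V \<subseteq> {..<n}"
  obtains x where "x \<in> instances n k"
    and "\<And>p. card {j \<in> V. x ! j = p} \<le> (card V + k - 1) div k"
proof -
  obtain g where g: "bij_betw g V {..<card V}"
    using ex_bij_betw_finite_nat[OF assms(2)] atLeast0LessThan by auto
  define x where "x = map (\<lambda>j. g j mod k + 1) [0..<n]"
  have x_nth: "x ! j = g j mod k + 1" if "j \<in> V" for j
    using that assms(3) unfolding x_def by auto
  have "g j mod k + 1 \<in> {1..k}" for j
    using assms(1) by (simp add: Suc_le_eq)
  then have "set x \<subseteq> {1..k}"
    unfolding x_def by (auto simp del: atLeastAtMost_iff)
  moreover have "length x = n"
    unfolding x_def by simp
  ultimately have "x \<in> instances n k"
    unfolding instances_def by simp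
  moreover have "card {j \<in> V. x ! j = p} \<le> (card V + k - 1) div k" for p
  proof -
    have "inj_on g {j \<in> V. x ! j = p}"
      using bij_betw_imp_inj_on[OF g] by (rule inj_on_subset) blast
    then have "card {j \<in> V. x ! j = p} = card (g ` {j \<in> V. x ! j = p})"
      by (simp add: card_image)
    also have "\<dots> \<le> card {t \<in> {..<card V}. t mod k = p - 1}"
    proof (rule card_mono)
      show "g ` {j \<in> V. x ! j = p} \<subseteq> {t \<in> {..<card V}. t mod k = p - 1}"
        using bij_betw_apply[OF g] x_nth by force
    qed simp
    also have "\<dots> \<le> (card V + k - 1) div k"
      by (rule card_residue_class_le[OF assms(1)])
    finally show ?thesis .
  qed
  ultimately show thesis using that by blast
qed

lemma ln_potential_step:
  fixes k m c :: nat
  assumes k: "3 \<le> k" and m: "k \<le> m" and c: "k * c \<le> m + k - 1"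
  shows "c < m"
    and "(real k / 2 - 1) * ln (real m / real k)
           \<le> 1 + (real k / 2 - 1) * ln (real (m - c) / real k)"
proof -
  have "2 * m \<le> (k - 1) * m"
    using k by (intro mult_le_mono1) simp
  then have "m + k - 1 < k * m"
    using k m by (simp add: diff_mult_distrib)
  then have "k * c < k * m"
    using c by linarith
  then show c_lt: "c < m" by simp
  define m' where "m' = real (m - c)"
  have m': "1 \<le> m'" "real m = m' + real c"
    using c_lt unfolding m'_def by auto
  have "real (k * c) \<le> real (2 * m)"
    using c m by linarith
  then have kc: "real k * real c \<le> 2 * real m" by simp
  have "ln (real m / real k) - ln (m' / real k) = ln (1 + real c / m')"
    using m' k by (simp add: ln_div field_simps)
  also have "\<dots> \<le> real c / m'"
    by (rule ln_add_one_self_le_self) (use m' in simp)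
  finally have ln_drop: "ln (real m / real k) - ln (m' / real k) \<le> real c / m'" .
  have "(real k / 2 - 1) * (real c / m') \<le> 1"
    using kc m' by (simp add: field_simps)
  then have "(real k / 2 - 1) * (ln (real m / real k) - ln (m' / real k)) \<le> 1"
    using mult_left_mono[OF ln_drop, of "real k / 2 - 1"] k by linarith
  then show "(real k / 2 - 1) * ln (real m / real k) \<le> 1 + (real k / 2 - 1) * ln (m' / real k)"
    by (simp add: algebra_simps)
qed

lemma adversary_forces_mistakes:
  fixes L :: learner and V :: "nat set"
  assumes "3 \<le> k" "finite V" "V \<subseteq> {..<n}" "V \<noteq> {}"
  shows "\<exists>xs. \<exists>i \<in> V. set xs \<subseteq> instances n k \<and>
           (real k / 2 - 1) * ln (real (card V) / real k)
             \<le> real (mistakes_from L h (map (\<lambda>x. (x, x ! i)) xs))"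
  using assms(2-)
proof (induction "card V" arbitrary: V h rule: less_induct)
  case less
  show ?case
  proof (cases "card V < k")
    case True
    then have "(real k / 2 - 1) * ln (real (card V) / real k) \<le> 0"
      using assms(1) less.prems by (intro mult_nonneg_nonpos) (auto simp: card_gt_0_iff)
    then show ?thesis using less.prems(3) by (intro exI[of _ "[]"]) auto
  next
    case False
    define c where "c = (card V + k - 1) div k"
    have "k * c \<le> card V + k - 1" "0 < c"
      using False assms(1) by (simp_all add: c_def div_greater_zero_iff)
    note step = ln_potential_step[OF assms(1) leI[OF False] this(1)]
    obtain x where x: "x \<in> instances n k"
      and balanced: "\<And>p. card {j \<in> V. x ! j = p} \<le> c"
      using balanced_instance[of k V n] assms(1) less.prems unfolding c_def by auto
    define p where "p = L h x"
    \<comment> \<open>Shrinking to exactly card V - c experts keeps the recursion going even when no expert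
      of V agrees with the prediction.\<close>
    have "card V - c \<le> card (V - {j \<in> V. x ! j = p})"
      using balanced[of p] less.prems(1) by (simp add: card_Diff_subset)
    then obtain V' where V': "V' \<subseteq> V - {j \<in> V. x ! j = p}" "card V' = card V - c"
      by (meson obtain_subset_with_card_n)
    have "finite V'" "V' \<subseteq> {..<n}" "V' \<noteq> {}" "card V' < card V"
      using V' less.prems step(1) \<open>0 < c\<close> finite_subset[of V' V] by auto
    then obtain xs i where i: "i \<in> V'" and xs: "set xs \<subseteq> instances n k"
      and ih: "(real k / 2 - 1) * ln (real (card V') / real k)
                 \<le> real (mistakes_from L (h @ [(x, p, False)]) (map (\<lambda>x. (x, x ! i)) xs))"
      using less.hyps[of V' "h @ [(x, p, False)]"] by blast
    have "mistakes_from L h (map (\<lambda>x. (x, x ! i)) (x # xs))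
            = 1 + mistakes_from L (h @ [(x, p, False)]) (map (\<lambda>x. (x, x ! i)) xs)"
      using i V'(1) by (auto simp: p_def[symmetric] Let_def)
    then have "(real k / 2 - 1) * ln (real (card V) / real k)
                 \<le> real (mistakes_from L h (map (\<lambda>x. (x, x ! i)) (x # xs)))"
      using step(2) ih V'(2) by simp
    then show ?thesis using i V'(1) x xs by (intro exI[of _ "x # xs"] bexI[of _ i]) auto
  qed
qed

lemma expert_labelled_realizable:
  assumes "set xs \<subseteq> instances n k" "i < n"
  shows "map (\<lambda>x. (x, x ! i)) xs \<in> realizable_seqs n k"
proof -
  have "x ! i \<in> {1..k}" if "x \<in> set xs" for x
  proof -
    have "length x = n" "set x \<subseteq> {1..k}"
      using that assms(1) unfolding instances_def by auto
    then show ?thesis using assms(2) nth_mem by blast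
  qed
  then show ?thesis
    using assms unfolding realizable_seqs_def by auto
qed

theorem lemma4p5:
  fixes n k :: nat
  assumes "3 \<le> k" and "k \<le> n"
  shows "ereal ((real k / 2 - 1) * ln (real n / real k)) \<le> opt_bandit_det n k"
  unfolding opt_bandit_det_def
proof (rule INF_greatest)
  fix L assume "L \<in> det_learners k"
  have "{..<n} \<noteq> {}" using assms by (simp add: lessThan_empty_iff)
  then obtain xs i where i: "i < n" and xs: "set xs \<subseteq> instances n k"
    and bound: "(real k / 2 - 1) * ln (real n / real k)
                  \<le> real (mistakes L (map (\<lambda>x. (x, x ! i)) xs))"
    using adversary_forces_mistakes[OF assms(1), of "{..<n}" n L "[]"]
    unfolding mistakes_def by auto
  show "ereal ((real k / 2 - 1) * ln (real n / real k))
          \<le> (SUP S \<in> realizable_seqs n k. ereal (real (mistakes L S)))"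
    using bound expert_labelled_realizable[OF xs i] by (intro SUP_upper2) auto
qed

end
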